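(* Let $\mathcal{X}$ be a finite-dimensional real Hilbert space, $\rho\in\mathbb{R}$, and $f:\mathcal{X}\to\mathbb{R}$ $\rho$-convex. Let $(x^i)_{i\ge1}\subset\mathcal{X}$, $\bar x^i:=\frac1i\sum_{j=1}^i x^j$, and for $N\in\mathbb{N}$ let $\bar f:=\frac1N\sum_{i=1}^N f(x^i)$. Then for all $N\in\mathbb{N}$, \[ f(\bar x^N)\le\bar f-\frac{\rho}{2N}\sum_{i=1}^N\frac{i-1}{i}\|x^i-\bar x^{i-1}\|^2, \] and moreover for every $x\in\mathcal{X}$, \[ f(\bar x^N)\le\bar f+\max(0,-\rho)\left[\frac1N\sum_{i=1}^N\|x^i-x\|^2+\frac1N\sum_{i=1}^N\frac1i\sum_{j=1}^{i-1}\|x^j-x\|^2\right]. \]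
   Context: $f$ is $\rho$-convex if $f-\frac{\rho}{2}\|\cdot\|^2$ is convex. The $i=1$ term in the first sum has coefficient $0$ (so $\bar x^0$ plays no role). *)

theory Defs
  imports "HOL-Analysis.Analysis"
begin

definition rho_convex :: "real \<Rightarrow> ('a::real_inner \<Rightarrow> real) \<Rightarrow> bool" where
  "rho_convex \<rho> f \<longleftrightarrow> convex_on UNIV (\<lambda>y. f y - (\<rho> / 2) * (norm y)\<^sup>2)"

text \<open>Running average: xbar x i = (1/i) * sum_{j=1..i} x j  (xbar x 0 = 0, unused).\<close>
definition xbar :: "(nat \<Rightarrow> 'a::real_vector) \<Rightarrow> nat \<Rightarrow> 'a" where
  "xbar x i = (1 / real i) *\<^sub>R (\<Sum>j=1..i. x j)"

end

theory Submission
  imports Defs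
begin

text \<open>Write m(n) for the running average xbar x n. Since
  m(n+1) = (1 - t) m(n) + t x(n+1) with t = 1/(n+1), \<rho>-convexity gives
  (n+1) f(m(n+1)) \<le> n f(m(n)) + f(x(n+1)) - \<rho>/2 * n/(n+1) * \<parallel>x(n+1) - m(n)\<parallel>^2,
  and these inequalities telescope to the first bound. In the second bound only max 0 (-\<rho>)
  enters, because the subtracted sum is nonnegative; each \<parallel>x(i) - m(i-1)\<parallel>^2 is at most
  2\<parallel>x(i) - z\<parallel>^2 + 2\<parallel>m(i-1) - z\<parallel>^2, and by Jensen
  (i-1) \<parallel>m(i-1) - z\<parallel>^2 \<le> \<Sum>j<i. \<parallel>x(j) - z\<parallel>^2.\<close>

lemma norm_convex_combination_squared:
  fixes a b :: "'a::real_inner"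
  shows "(norm ((1 - t) *\<^sub>R a + t *\<^sub>R b))\<^sup>2
     = (1 - t) * (norm a)\<^sup>2 + t * (norm b)\<^sup>2 - t * (1 - t) * (norm (a - b))\<^sup>2"
  unfolding power2_norm_eq_inner
  by (simp add: inner_add_left inner_add_right inner_diff_left inner_diff_right
      inner_commute algebra_simps)

lemma rho_convexD:
  assumes "rho_convex \<rho> f" "0 \<le> t" "t \<le> 1"
  shows "f ((1 - t) *\<^sub>R a + t *\<^sub>R b)
     \<le> (1 - t) * f a + t * f b - \<rho> / 2 * (t * (1 - t)) * (norm (a - b))\<^sup>2"
proof -
  have "f ((1 - t) *\<^sub>R a + t *\<^sub>R b) - \<rho> / 2 * (norm ((1 - t) *\<^sub>R a + t *\<^sub>R b))\<^sup>2
     \<le> (1 - t) * (f a - \<rho> / 2 * (norm a)\<^sup>2) + t * (f b - \<rho> / 2 * (norm b)\<^sup>2)"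
    using convex_onD[OF assms(1)[unfolded rho_convex_def], of t a b] assms(2,3) by simp
  then show ?thesis
    unfolding norm_convex_combination_squared by (simp add: field_simps)
qed

lemma norm_diff_squared_le:
  fixes a b z :: "'a::real_inner"
  shows "(norm (a - b))\<^sup>2 \<le> 2 * (norm (a - z))\<^sup>2 + 2 * (norm (b - z))\<^sup>2"
proof -
  have "2 * (norm (a - z))\<^sup>2 + 2 * (norm (b - z))\<^sup>2 - (norm (a - b))\<^sup>2
      = (norm ((a - z) + (b - z)))\<^sup>2"
    unfolding power2_norm_eq_inner
    by (simp add: inner_add_left inner_add_right inner_diff_left inner_diff_right
        inner_commute algebra_simps)
  then show ?thesis
    by (metis diff_ge_0_iff_ge zero_le_power2)
qed

lemma norm_sum_squared_le:
  fixes v :: "'b \<Rightarrow> 'a::real_normed_vector"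
  shows "(norm (\<Sum>j\<in>A. v j))\<^sup>2 \<le> real (card A) * (\<Sum>j\<in>A. (norm (v j))\<^sup>2)"
proof -
  have "(norm (\<Sum>j\<in>A. v j))\<^sup>2 \<le> (\<Sum>j\<in>A. norm (v j))\<^sup>2"
    by (intro power_mono norm_sum) simp
  also have "\<dots> \<le> real (card A) * (\<Sum>j\<in>A. (norm (v j))\<^sup>2)"
    using sum_squared_le_sum_of_squares[of "\<lambda>j. norm (v j)" A] by (simp add: mult.commute)
  finally show ?thesis .
qed

lemma scaleR_xbar: "real n *\<^sub>R xbar x n = (\<Sum>j=1..n. x j)"
  by (cases "n = 0") (simp_all add: xbar_def)

lemma xbar_Suc:
  "xbar x (Suc n) = (real n / real (Suc n)) *\<^sub>R xbar x n + (1 / real (Suc n)) *\<^sub>R x (Suc n)"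
proof -
  have "(real n / real (Suc n)) *\<^sub>R xbar x n = (1 / real (Suc n)) *\<^sub>R (real n *\<^sub>R xbar x n)"
    by simp
  also have "\<dots> = (1 / real (Suc n)) *\<^sub>R (\<Sum>j=1..n. x j)"
    by (simp only: scaleR_xbar)
  finally show ?thesis
    by (simp add: xbar_def scaleR_add_right)
qed

lemma xbar_dist_squared_le:
  "real m * (norm (xbar x m - z))\<^sup>2 \<le> (\<Sum>j=1..m. (norm (x j - z))\<^sup>2)"
proof (cases "m = 0")
  case False
  have "real m *\<^sub>R (xbar x m - z) = (\<Sum>j=1..m. x j - z)"
    by (simp add: scaleR_xbar scaleR_diff_right sum_subtractf sum_constant_scaleR)
  then have "(real m)\<^sup>2 * (norm (xbar x m - z))\<^sup>2 = (norm (\<Sum>j=1..m. x j - z))\<^sup>2"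
    by (metis norm_scaleR abs_of_nat power_mult_distrib)
  also have "\<dots> \<le> real m * (\<Sum>j=1..m. (norm (x j - z))\<^sup>2)"
    using norm_sum_squared_le[of "\<lambda>j. x j - z" "{1..m}"] by simp
  finally show ?thesis
    using False by (simp add: power2_eq_square)
qed simp

lemma rho_convex_xbar_Suc:
  assumes "rho_convex \<rho> f"
  shows "real (Suc n) * f (xbar x (Suc n)) \<le> real n * f (xbar x n) + f (x (Suc n))
           - \<rho> / 2 * (real n / real (Suc n) * (norm (x (Suc n) - xbar x n))\<^sup>2)"
proof -
  define t where "t = 1 / real (Suc n)"
  have one_minus_t: "1 - t = real n / real (Suc n)"
    by (simp add: t_def field_simps)
  have "xbar x (Suc n) = (1 - t) *\<^sub>R xbar x n + t *\<^sub>R x (Suc n)"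
    unfolding one_minus_t unfolding t_def by (rule xbar_Suc)
  then have "f (xbar x (Suc n)) \<le> (1 - t) * f (xbar x n) + t * f (x (Suc n))
      - \<rho> / 2 * (t * (1 - t)) * (norm (xbar x n - x (Suc n)))\<^sup>2"
    by (simp only:) (rule rho_convexD[OF assms]; simp add: t_def)
  then have "real (Suc n) * f (xbar x (Suc n)) \<le> real (Suc n) * ((1 - t) * f (xbar x n)
      + t * f (x (Suc n)) - \<rho> / 2 * (t * (1 - t)) * (norm (xbar x n - x (Suc n)))\<^sup>2)"
    by (rule mult_left_mono) simp
  also have "\<dots> = real n * f (xbar x n) + f (x (Suc n))
           - \<rho> / 2 * (real n / real (Suc n) * (norm (x (Suc n) - xbar x n))\<^sup>2)"
    unfolding one_minus_t by (simp add: t_def field_simps norm_minus_commute del: of_nat_Suc)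
  finally show ?thesis .
qed

lemma rho_convex_xbar_telescoped:
  assumes "rho_convex \<rho> f"
  shows "real n * f (xbar x n) \<le> (\<Sum>i=1..n. f (x i))
      - \<rho> / 2 * (\<Sum>i=1..n. (real i - 1) / real i * (norm (x i - xbar x (i - 1)))\<^sup>2)"
proof (induction n)
  case (Suc n)
  then show ?case
    using rho_convex_xbar_Suc[OF assms, of n x] by (simp add: algebra_simps)
qed simp

lemma deviation_from_xbar_le:
  fixes x :: "nat \<Rightarrow> 'a::real_inner"
  assumes "i \<ge> 1"
  shows "(real i - 1) / real i * (norm (x i - xbar x (i - 1)))\<^sup>2
     \<le> 2 * (norm (x i - z))\<^sup>2 + 2 * ((1 / real i) * (\<Sum>j=1..i-1. (norm (x j - z))\<^sup>2))"
proof -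
  obtain m where i: "i = Suc m"
    using assms by (cases i) auto
  have c: "0 \<le> real m / real (Suc m)" "real m / real (Suc m) \<le> 1"
    by auto
  have "real m / real (Suc m) * (norm (x i - xbar x m))\<^sup>2
      \<le> real m / real (Suc m) * (2 * (norm (x i - z))\<^sup>2 + 2 * (norm (xbar x m - z))\<^sup>2)"
    by (intro mult_left_mono norm_diff_squared_le c)
  also have "\<dots> = real m / real (Suc m) * (2 * (norm (x i - z))\<^sup>2)
      + 2 / real (Suc m) * (real m * (norm (xbar x m - z))\<^sup>2)"
    by (simp add: field_simps del: of_nat_Suc)
  also have "\<dots> \<le> 2 * (norm (x i - z))\<^sup>2 + 2 / real (Suc m) * (\<Sum>j=1..m. (norm (x j - z))\<^sup>2)"
    by (intro add_mono mult_left_le_one_le mult_left_mono xbar_dist_squared_le c) auto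
  finally show ?thesis
    by (simp add: i)
qed

lemma deviation_from_xbar_sum_le:
  fixes x :: "nat \<Rightarrow> 'a::real_inner"
  shows "(\<Sum>i=1..N. (real i - 1) / real i * (norm (x i - xbar x (i - 1)))\<^sup>2)
     \<le> 2 * ((\<Sum>i=1..N. (norm (x i - z))\<^sup>2)
              + (\<Sum>i=1..N. (1 / real i) * (\<Sum>j=1..i-1. (norm (x j - z))\<^sup>2)))"
proof -
  have "(\<Sum>i=1..N. (real i - 1) / real i * (norm (x i - xbar x (i - 1)))\<^sup>2)
     \<le> (\<Sum>i=1..N. 2 * (norm (x i - z))\<^sup>2 + 2 * ((1 / real i) * (\<Sum>j=1..i-1. (norm (x j - z))\<^sup>2)))"
    by (intro sum_mono deviation_from_xbar_le) simp
  then show ?thesis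
    by (simp add: sum.distrib sum_distrib_left distrib_left)
qed

lemma rho_convex_xbar_le:
  assumes "rho_convex \<rho> f" "N \<ge> 1"
  shows "f (xbar x N) \<le> (1 / real N) * (\<Sum>i=1..N. f (x i))
           - \<rho> / (2 * real N) * (\<Sum>i=1..N. (real i - 1) / real i * (norm (x i - xbar x (i - 1)))\<^sup>2)"
  using rho_convex_xbar_telescoped[OF assms(1), of N x] assms(2)
  by (simp add: field_simps)

lemma rho_convex_xbar_le_dist:
  assumes "rho_convex \<rho> f" "N \<ge> 1"
  shows "f (xbar x N) \<le> (1 / real N) * (\<Sum>i=1..N. f (x i))
           + max 0 (- \<rho>) * ((1 / real N) * (\<Sum>i=1..N. (norm (x i - z))\<^sup>2)
              + (1 / real N) * (\<Sum>i=1..N. (1 / real i) * (\<Sum>j=1..i-1. (norm (x j - z))\<^sup>2)))"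
proof -
  let ?S = "\<Sum>i=1..N. (real i - 1) / real i * (norm (x i - xbar x (i - 1)))\<^sup>2"
  let ?R = "(\<Sum>i=1..N. (norm (x i - z))\<^sup>2)
    + (\<Sum>i=1..N. (1 / real i) * (\<Sum>j=1..i-1. (norm (x j - z))\<^sup>2))"
  have "0 \<le> ?S"
    by (intro sum_nonneg) auto
  then have "- \<rho> / (2 * real N) * ?S \<le> max 0 (- \<rho>) / (2 * real N) * ?S"
    by (intro mult_right_mono divide_right_mono) auto
  also have "\<dots> \<le> max 0 (- \<rho>) / (2 * real N) * (2 * ?R)"
    by (intro mult_left_mono deviation_from_xbar_sum_le) auto
  also have "\<dots> = max 0 (- \<rho>) * ((1 / real N) * (\<Sum>i=1..N. (norm (x i - z))\<^sup>2)
      + (1 / real N) * (\<Sum>i=1..N. (1 / real i) * (\<Sum>j=1..i-1. (norm (x j - z))\<^sup>2)))"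
    using assms(2) by (simp add: field_simps)
  finally show ?thesis
    using rho_convex_xbar_le[OF assms, of x] by simp
qed

theorem mainTheorem10:
  fixes f :: "'a::euclidean_space \<Rightarrow> real" and \<rho> :: real
    and x :: "nat \<Rightarrow> 'a" and N :: nat
  assumes "rho_convex \<rho> f" and "N \<ge> 1"
  shows "(f (xbar x N) \<le> (1 / real N) * (\<Sum>i=1..N. f (x i))
           - \<rho> / (2 * real N) * (\<Sum>i=1..N. (real i - 1) / real i * (norm (x i - xbar x (i - 1)))\<^sup>2))
         \<and> (\<forall>z. f (xbar x N) \<le> (1 / real N) * (\<Sum>i=1..N. f (x i))
           + max 0 (- \<rho>) * ((1 / real N) * (\<Sum>i=1..N. (norm (x i - z))\<^sup>2)
              + (1 / real N) * (\<Sum>i=1..N. (1 / real i) * (\<Sum>j=1..i-1. (norm (x j - z))\<^sup>2))))"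
  using rho_convex_xbar_le[OF assms] rho_convex_xbar_le_dist[OF assms] by blast

end
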